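(* Let $H$ be a reduced hypergraph, let $n\ge 1$, and let $m = 4\,\mathrm{rank}(H)^6 n^5$. If the $m\times m$-grid is a minor of the primal graph of $H$, then the $n\times n$-grid is an expressive minor of $H$.
   Context: A hypergraph $H$ is a pair $(V(H),E(H))$ with $E(H)\subseteq 2^{V(H)}$; $\mathrm{rank}(H)=\max_{e}|e|$. $H$ is reduced if every vertex lies in at least one edge, there is no empty edge, and no two distinct vertices lie in exactly the same set of edges. The primal graph of $H$ has vertex set $V(H)$, with $x,y$ adjacent iff some edge contains both. A minor map from a graph $G$ onto $H$ is $\mu:V(G)\to 2^{V(H)}$ with each $\mu(v)$ connected in the primal graph, the $\mu(v)$ pairwise disjoint, for adjacent $u,v$ some primal edge joining $\mu(u)$ and $\mu(v)$, and $\bigcup_v\mu(v)=V(H)$. A path in $H$ alternates vertices and edges, consecutive elements incident, without repetition. $\mu$ is an expressive minor map if it is a minor map from $G$ onto $H$ and there is $\rho:E(G)\to E(H)$ such that: $\rho$ is injective; for every edge $\{u,v\}$ of $G$, $\rho(\{u,v\})$ intersects both $\mu(u)$ and $\mu(v)$; and for any two edges $e_1,e_2$ of $G$ sharing a vertex there is a path in $H$ from $\rho(e_1)$ to $\rho(e_2)$ using no edge of $\rho(E(G))$ other than $\rho(e_1),\rho(e_2)$ as its start and end. $G$ is an expressive minor of $H$ if such a map exists. *)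

theory Defs
  imports Main
begin

type_synonym 'v hypergraph = "'v set \<times> 'v set set"

definition hV :: "'v hypergraph \<Rightarrow> 'v set" where "hV H = fst H"
definition hE :: "'v hypergraph \<Rightarrow> 'v set set" where "hE H = snd H"

definition hypergraph :: "'v hypergraph \<Rightarrow> bool" where
  "hypergraph H \<longleftrightarrow> hE H \<subseteq> Pow (hV H)"

definition hrank :: "'v hypergraph \<Rightarrow> nat" where
  "hrank H = Max (insert 0 (card ` hE H))"

definition reduced :: "'v hypergraph \<Rightarrow> bool" where
  "reduced H \<longleftrightarrow>
     (\<forall>x\<in>hV H. \<exists>e\<in>hE H. x \<in> e) \<and>
     {} \<notin> hE H \<and>
     (\<forall>x\<in>hV H. \<forall>y\<in>hV H. x \<noteq> y \<longrightarrow> {e\<in>hE H. x \<in> e} \<noteq> {e\<in>hE H. y \<in> e})"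

text \<open>A (simple) graph is a pair (V, E) where E is a set of 2-element subsets of V.
  We reuse the pair type.\<close>
type_synonym 'v graph = "'v set \<times> 'v set set"

definition primal_graph :: "'v hypergraph \<Rightarrow> 'v graph" where
  "primal_graph H = (hV H, {{x, y} | x y. x \<in> hV H \<and> y \<in> hV H \<and> x \<noteq> y \<and> (\<exists>e\<in>hE H. x \<in> e \<and> y \<in> e)})"

definition grid :: "nat \<Rightarrow> (nat \<times> nat) graph" where
  "grid n = ({0..<n} \<times> {0..<n},
     {{(i, j), (i', j')} | i j i' j'. i < n \<and> j < n \<and> i' < n \<and> j' < n \<and>
        ((i' = Suc i \<and> j' = j) \<or> (i' = i \<and> j' = Suc j))})"

definition connected_in :: "'v graph \<Rightarrow> 'v set \<Rightarrow> bool" where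
  "connected_in P S \<longleftrightarrow> S \<noteq> {} \<and> S \<subseteq> fst P \<and>
     (\<forall>x\<in>S. \<forall>y\<in>S. (\<lambda>a b. a \<in> S \<and> b \<in> S \<and> {a, b} \<in> snd P)\<^sup>*\<^sup>* x y)"

definition minor_map :: "'a graph \<Rightarrow> 'v graph \<Rightarrow> ('a \<Rightarrow> 'v set) \<Rightarrow> bool" where
  "minor_map G P \<mu> \<longleftrightarrow>
     (\<forall>v\<in>fst G. connected_in P (\<mu> v)) \<and>
     (\<forall>u\<in>fst G. \<forall>v\<in>fst G. u \<noteq> v \<longrightarrow> \<mu> u \<inter> \<mu> v = {}) \<and>
     (\<forall>u v. {u, v} \<in> snd G \<longrightarrow> (\<exists>x\<in>\<mu> u. \<exists>y\<in>\<mu> v. {x, y} \<in> snd P)) \<and>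
     \<Union> (\<mu> ` fst G) = fst P"

definition is_minor :: "'a graph \<Rightarrow> 'v graph \<Rightarrow> bool" where
  "is_minor G P \<longleftrightarrow> (\<exists>\<mu>. minor_map G P \<mu>)"

text \<open>A path in H from edge f1 to edge f2: f1 = es!0, vs!0, es!1, vs!1, ..., es!k = f2,
  consecutive elements incident, no repetitions.\<close>
definition hpath :: "'v hypergraph \<Rightarrow> 'v set list \<Rightarrow> 'v list \<Rightarrow> bool" where
  "hpath H es vs \<longleftrightarrow> es \<noteq> [] \<and> length es = Suc (length vs) \<and>
     set es \<subseteq> hE H \<and> set vs \<subseteq> hV H \<and>
     (\<forall>i<length vs. vs ! i \<in> es ! i \<and> vs ! i \<in> es ! Suc i) \<and>
     distinct es \<and> distinct vs"

definition expressive_minor_map :: "'a graph \<Rightarrow> 'v hypergraph \<Rightarrow> ('a \<Rightarrow> 'v set) \<Rightarrow> bool" where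
  "expressive_minor_map G H \<mu> \<longleftrightarrow> minor_map G (primal_graph H) \<mu> \<and>
     (\<exists>\<rho> :: 'a set \<Rightarrow> 'v set.
        inj_on \<rho> (snd G) \<and> \<rho> ` snd G \<subseteq> hE H \<and>
        (\<forall>u v. {u, v} \<in> snd G \<longrightarrow> \<rho> {u, v} \<inter> \<mu> u \<noteq> {} \<and> \<rho> {u, v} \<inter> \<mu> v \<noteq> {}) \<and>
        (\<forall>e1\<in>snd G. \<forall>e2\<in>snd G. e1 \<noteq> e2 \<and> e1 \<inter> e2 \<noteq> {} \<longrightarrow>
           (\<exists>es vs. hpath H es vs \<and> hd es = \<rho> e1 \<and> last es = \<rho> e2 \<and>
              (\<forall>f\<in>set es. f \<in> \<rho> ` snd G \<longrightarrow> f = \<rho> e1 \<or> f = \<rho> e2))))"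

definition expressive_minor :: "'a graph \<Rightarrow> 'v hypergraph \<Rightarrow> bool" where
  "expressive_minor G H \<longleftrightarrow> (\<exists>\<mu>. expressive_minor_map G H \<mu>)"

end

theory Submission
  imports Defs "HOL-Library.FuncSet" "HOL-Library.Transitive_Closure_Table"
begin

text \<open>Cut the m x m grid into n x n blocks of side s; the union of the branch sets of a block
  is the branch set of the corresponding vertex of the n x n grid. For every edge of the n x n grid
  take one of L parallel segments of cells (spines) running from the common border into one of
  its two blocks, and a hyperedge joining the border cell of that spine to the other block; these
  hyperedges are the images under rho. A hyperedge meets at most rank-many branch sets, so
  counting all choices yields one in which no chosen hyperedge meets the spine of another. The
  chosen hyperedges meet fewer than L cells altogether, so some row, some column and, on every
  spine, the line through some cell perpendicular to the spine are free of them. Following a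
  spine beyond the last cell met by its own hyperedge and then these free lines connects any two
  chosen hyperedges through unchosen ones, and a shortest such connection is a path.\<close>

section \<open>Connectivity in graphs and grids\<close>

definition adj_within :: "'v graph \<Rightarrow> 'v set \<Rightarrow> 'v \<Rightarrow> 'v \<Rightarrow> bool" where
  "adj_within P S a b \<longleftrightarrow> a \<in> S \<and> b \<in> S \<and> {a, b} \<in> snd P"

lemma connected_in_iff_adj_within:
  "connected_in P S \<longleftrightarrow> S \<noteq> {} \<and> S \<subseteq> fst P \<and> (\<forall>x\<in>S. \<forall>y\<in>S. (adj_within P S)\<^sup>*\<^sup>* x y)"
  unfolding connected_in_def adj_within_def by simp

lemma symp_adj_within: "symp (adj_within P S)"
  by (auto simp: symp_def adj_within_def insert_commute)

lemma adj_within_rtranclp_sym: "(adj_within P S)\<^sup>*\<^sup>* x y \<Longrightarrow> (adj_within P S)\<^sup>*\<^sup>* y x"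
  using symp_adj_within symp_rtranclp sympD by metis

lemma adj_within_rtranclp_mono:
  "S \<subseteq> T \<Longrightarrow> (adj_within P S)\<^sup>*\<^sup>* x y \<Longrightarrow> (adj_within P T)\<^sup>*\<^sup>* x y"
  by (erule rtranclp_mono[THEN predicate2D, rotated]) (auto simp: adj_within_def)

lemma rtranclp_chain:
  assumes "\<And>k. a \<le> k \<Longrightarrow> k < b \<Longrightarrow> R (h k) (h (Suc k))" and "a \<le> b"
  shows "R\<^sup>*\<^sup>* (h a) (h b)"
  using assms
proof (induction b)
  case (Suc b)
  then show ?case
    by (cases "a = Suc b") (auto intro: rtranclp.rtrancl_into_rtrancl)
qed simp

lemma adj_within_segment:
  assumes "\<And>k. min a b \<le> k \<Longrightarrow> k < max a b \<Longrightarrow> {h k, h (Suc k)} \<in> snd G"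
    and "\<And>k. min a b \<le> k \<Longrightarrow> k \<le> max a b \<Longrightarrow> h k \<in> A"
  shows "(adj_within G A)\<^sup>*\<^sup>* (h a) (h b)"
proof -
  have "(adj_within G A)\<^sup>*\<^sup>* (h (min a b)) (h (max a b))"
    by (rule rtranclp_chain) (use assms in \<open>auto simp: adj_within_def\<close>)
  then show ?thesis
    by (cases "a \<le> b") (auto simp: min_def max_def dest: adj_within_rtranclp_sym)
qed

lemma primal_edge_iff:
  "{x, y} \<in> snd (primal_graph H) \<longleftrightarrow>
     x \<in> hV H \<and> y \<in> hV H \<and> x \<noteq> y \<and> (\<exists>e\<in>hE H. x \<in> e \<and> y \<in> e)"
  unfolding primal_graph_def by (auto simp: doubleton_eq_iff)

lemma grid_edge_down: "Suc i < m \<Longrightarrow> j < m \<Longrightarrow> {(i, j), (Suc i, j)} \<in> snd (grid m)"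
  unfolding grid_def by simp (use Suc_lessD in blast)

lemma grid_edge_right: "i < m \<Longrightarrow> Suc j < m \<Longrightarrow> {(i, j), (i, Suc j)} \<in> snd (grid m)"
  unfolding grid_def by simp (use Suc_lessD in blast)

lemma grid_row_path:
  assumes "y < m" "x1 < m" "x2 < m" "\<And>x. min x1 x2 \<le> x \<Longrightarrow> x \<le> max x1 x2 \<Longrightarrow> (y, x) \<in> A"
  shows "(adj_within (grid m) A)\<^sup>*\<^sup>* (y, x1) (y, x2)"
  using adj_within_segment[where h = "Pair y" and a = x1 and b = x2] assms
  by (simp add: grid_edge_right)

lemma grid_col_path:
  assumes "x < m" "y1 < m" "y2 < m" "\<And>y. min y1 y2 \<le> y \<Longrightarrow> y \<le> max y1 y2 \<Longrightarrow> (y, x) \<in> A"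
  shows "(adj_within (grid m) A)\<^sup>*\<^sup>* (y1, x) (y2, x)"
  using adj_within_segment[where h = "\<lambda>y. (y, x)" and a = y1 and b = y2] assms
  by (simp add: grid_edge_down)

lemma grid_path_via_cross:
  assumes "y < m" "x < m" "w < m" "z < m"
    and "\<forall>x'<m. (w, x') \<in> A" "\<forall>y'<m. (y', z) \<in> A"
    and "(\<forall>x'<m. (y, x') \<in> A) \<or> (\<forall>y'<m. (y', x) \<in> A)"
  shows "(adj_within (grid m) A)\<^sup>*\<^sup>* (y, x) (w, z)"
  using assms(7)
proof
  assume "\<forall>x'<m. (y, x') \<in> A"
  then have "(adj_within (grid m) A)\<^sup>*\<^sup>* (y, x) (y, z)"
    using assms(1-4) by (intro grid_row_path) auto
  also have "(adj_within (grid m) A)\<^sup>*\<^sup>* (y, z) (w, z)"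
    using assms by (intro grid_col_path) auto
  finally show ?thesis .
next
  assume "\<forall>y'<m. (y', x) \<in> A"
  then have "(adj_within (grid m) A)\<^sup>*\<^sup>* (y, x) (w, x)"
    using assms(1-4) by (intro grid_col_path) auto
  also have "(adj_within (grid m) A)\<^sup>*\<^sup>* (w, x) (w, z)"
    using assms by (intro grid_row_path) auto
  finally show ?thesis .
qed

lemma rtranclp_lift_branch_sets:
  assumes inner: "\<And>a x y. a \<in> A \<Longrightarrow> x \<in> \<nu> a \<Longrightarrow> y \<in> \<nu> a \<Longrightarrow> T\<^sup>*\<^sup>* x y"
    and adj: "\<And>a b. a \<in> A \<Longrightarrow> b \<in> A \<Longrightarrow> {a, b} \<in> snd G \<Longrightarrow> \<exists>x\<in>\<nu> a. \<exists>y\<in>\<nu> b. T\<^sup>*\<^sup>* x y"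
    and "(adj_within G A)\<^sup>*\<^sup>* a b" and "a \<in> A"
  shows "\<forall>x\<in>\<nu> a. \<forall>y\<in>\<nu> b. T\<^sup>*\<^sup>* x y"
  using assms(3)
proof induction
  case base
  then show ?case using inner \<open>a \<in> A\<close> by blast
next
  case (step b c)
  then have "b \<in> A" "c \<in> A" "{b, c} \<in> snd G" by (auto simp: adj_within_def)
  then obtain x' y' where x'y': "x' \<in> \<nu> b" "y' \<in> \<nu> c" "T\<^sup>*\<^sup>* x' y'" using adj by blast
  show ?case
  proof (intro ballI)
    fix x y assume "x \<in> \<nu> a" "y \<in> \<nu> c"
    have "T\<^sup>*\<^sup>* x x'" using step.IH \<open>x \<in> \<nu> a\<close> x'y' by blast
    also have "T\<^sup>*\<^sup>* x' y'" by (fact x'y'(3))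
    also have "T\<^sup>*\<^sup>* y' y" using inner \<open>c \<in> A\<close> x'y' \<open>y \<in> \<nu> c\<close> by blast
    finally show "T\<^sup>*\<^sup>* x y" .
  qed
qed

lemma connected_in_UN_branch_sets:
  assumes A: "connected_in G A" and branch: "\<And>a. a \<in> A \<Longrightarrow> connected_in P (\<nu> a)"
    and adj: "\<And>a b. {a, b} \<in> snd G \<Longrightarrow> \<exists>x\<in>\<nu> a. \<exists>y\<in>\<nu> b. {x, y} \<in> snd P"
  shows "connected_in P (\<Union> (\<nu> ` A))"
  unfolding connected_in_iff_adj_within
proof (intro conjI ballI)
  let ?U = "\<Union> (\<nu> ` A)"
  show "?U \<noteq> {}"
    using A branch unfolding connected_in_def by fastforce
  show "?U \<subseteq> fst P"
    using branch unfolding connected_in_def by blast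
  fix x y assume "x \<in> ?U" "y \<in> ?U"
  then obtain a b where ab: "a \<in> A" "b \<in> A" "x \<in> \<nu> a" "y \<in> \<nu> b" by blast
  have inner: "(adj_within P ?U)\<^sup>*\<^sup>* x y" if "c \<in> A" "x \<in> \<nu> c" "y \<in> \<nu> c" for c x y
  proof (rule adj_within_rtranclp_mono)
    show "\<nu> c \<subseteq> ?U" using that(1) by blast
    show "(adj_within P (\<nu> c))\<^sup>*\<^sup>* x y"
      using branch[OF that(1)] that(2,3) unfolding connected_in_iff_adj_within by blast
  qed
  have cross: "\<exists>x\<in>\<nu> c. \<exists>y\<in>\<nu> d. (adj_within P ?U)\<^sup>*\<^sup>* x y"
    if cd: "c \<in> A" "d \<in> A" "{c, d} \<in> snd G" for c d
  proof -
    obtain x y where "x \<in> \<nu> c" "y \<in> \<nu> d" "{x, y} \<in> snd P" using adj[OF cd(3)] by blast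
    then have "adj_within P ?U x y" using cd unfolding adj_within_def by blast
    then show ?thesis using \<open>x \<in> \<nu> c\<close> \<open>y \<in> \<nu> d\<close> by blast
  qed
  have "(adj_within G A)\<^sup>*\<^sup>* a b"
    using A ab(1,2) unfolding connected_in_iff_adj_within by blast
  then have "\<forall>x\<in>\<nu> a. \<forall>y\<in>\<nu> b. (adj_within P ?U)\<^sup>*\<^sup>* x y"
    using ab(1) by (rule rtranclp_lift_branch_sets[rotated 2]) (use inner cross in blast)+
  then show "(adj_within P ?U)\<^sup>*\<^sup>* x y" using ab by blast
qed

lemma card_le_hrank:
  assumes "hypergraph H" "finite (hV H)" "e \<in> hE H"
  shows "card e \<le> hrank H"
proof -
  have "finite (hE H)"
    using assms(1,2) unfolding hypergraph_def by (meson finite_Pow_iff finite_subset)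
  then show ?thesis unfolding hrank_def using assms(3) by (intro Max_ge) auto
qed

lemma hrank_pos:
  assumes "hypergraph H" "finite (hV H)" "hV H \<noteq> {}" "reduced H"
  shows "1 \<le> hrank H"
proof -
  obtain x e where "e \<in> hE H" "x \<in> e" using assms(3,4) unfolding reduced_def by blast
  moreover have "finite e"
    using assms(1,2) \<open>e \<in> hE H\<close> unfolding hypergraph_def by (meson PowD finite_subset subsetD)
  ultimately have "1 \<le> card e" by (metis One_nat_def Suc_leI card_gt_0_iff empty_iff)
  also have "\<dots> \<le> hrank H" using card_le_hrank assms(1,2) \<open>e \<in> hE H\<close> .
  finally show ?thesis .
qed

definition adj_avoiding :: "'v hypergraph \<Rightarrow> 'v set set \<Rightarrow> 'v \<Rightarrow> 'v \<Rightarrow> bool" where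
  "adj_avoiding H R x y \<longleftrightarrow> (\<exists>e\<in>hE H - R. x \<in> e \<and> y \<in> e)"

lemma adj_avoiding_commute: "adj_avoiding H R x y \<longleftrightarrow> adj_avoiding H R y x"
  unfolding adj_avoiding_def by blast

lemma adj_avoiding_rtranclp_sym:
  "(adj_avoiding H R)\<^sup>*\<^sup>* x y \<Longrightarrow> (adj_avoiding H R)\<^sup>*\<^sup>* y x"
  using symp_rtranclp[of "adj_avoiding H R"] adj_avoiding_commute unfolding symp_def by metis

text \<open>Simple paths of the incidence graph from an edge to an edge are hypergraph paths, so
  reachability yields paths via rtrancl_path_distinct.\<close>
definition incidence :: "'v set set \<Rightarrow> 'v set + 'v \<Rightarrow> 'v set + 'v \<Rightarrow> bool" where
  "incidence F a b \<longleftrightarrow> (\<exists>e\<in>F. \<exists>v\<in>e. (a = Inl e \<and> b = Inr v) \<or> (a = Inr v \<and> b = Inl e))"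

lemma incidenceI:
  assumes "e \<in> F" "v \<in> e"
  shows "incidence F (Inl e) (Inr v)" and "incidence F (Inr v) (Inl e)"
  using assms unfolding incidence_def by auto

lemma hpath_Cons:
  assumes "hpath H es vs" "e \<in> hE H" "v \<in> hV H" "v \<in> e" "v \<in> hd es" "e \<notin> set es" "v \<notin> set vs"
  shows "hpath H (e # es) (v # vs)"
  using assms unfolding hpath_def by (auto simp: nth_Cons hd_conv_nth split: nat.split)

lemma rtrancl_path_Nil_iff: "rtrancl_path r x [] z \<longleftrightarrow> x = z"
  by (auto elim: rtrancl_path.cases intro: rtrancl_path.base)

lemma rtrancl_path_Cons_iff: "rtrancl_path r x (y # ys) z \<longleftrightarrow> r x y \<and> rtrancl_path r y ys z"
  by (auto elim: rtrancl_path.cases intro: rtrancl_path.step)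

lemma hpath_of_incidence_path:
  assumes "hypergraph H" "F \<subseteq> hE H" "e \<in> F"
    and "rtrancl_path (incidence F) (Inl e) xs (Inl f)" "distinct (Inl e # xs)"
  shows "\<exists>es vs. hpath H es vs \<and> hd es = e \<and> last es = f \<and> set es \<subseteq> F \<and>
           Inl ` set es \<union> Inr ` set vs \<subseteq> set (Inl e # xs)"
  using assms(3-5)
proof (induction xs arbitrary: e rule: length_induct)
  case (1 xs)
  show ?case
  proof (cases xs)
    case Nil
    then have "e = f" using "1.prems"(2) by (simp add: rtrancl_path_Nil_iff)
    moreover have "hpath H [e] []" using "1.prems"(1) assms(2) unfolding hpath_def by auto
    ultimately show ?thesis using "1.prems"(1) by (intro exI[of _ "[e]"] exI[of _ "[]"]) simp
  next
    case (Cons a ys)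
    then have "incidence F (Inl e) a" and ys: "rtrancl_path (incidence F) a ys (Inl f)"
      using "1.prems"(2) by (simp_all add: rtrancl_path_Cons_iff)
    then obtain v where v: "v \<in> e" "a = Inr v" by (auto simp: incidence_def)
    with ys obtain e' zs where zs: "ys = Inl e' # zs" "e' \<in> F" "v \<in> e'"
      and path: "rtrancl_path (incidence F) (Inl e') zs (Inl f)"
      by (cases ys) (auto simp: rtrancl_path_Nil_iff rtrancl_path_Cons_iff incidence_def)
    have "length zs < length xs" using Cons zs by simp
    moreover have "distinct (Inl e' # zs)" using "1.prems"(3) Cons zs by simp
    ultimately obtain es vs where IH: "hpath H es vs" "hd es = e'" "last es = f" "set es \<subseteq> F"
      "Inl ` set es \<union> Inr ` set vs \<subseteq> set (Inl e' # zs)"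
      using "1.IH" zs(2) path by blast
    have "hpath H (e # es) (v # vs)"
    proof (rule hpath_Cons)
      show "e \<in> hE H" using "1.prems"(1) assms(2) by blast
      show "v \<in> hV H" using v "1.prems"(1) assms(1,2) unfolding hypergraph_def by blast
      show "e \<notin> set es" "v \<notin> set vs" using IH(5) "1.prems"(3) Cons zs v by auto
    qed (use IH v zs in simp_all)
    moreover have "es \<noteq> []" using IH(1) unfolding hpath_def by simp
    ultimately show ?thesis
      using IH "1.prems"(1) Cons zs v by (intro exI[of _ "e # es"] exI[of _ "v # vs"]) auto
  qed
qed

lemma hpath_avoiding_exists:
  assumes "hypergraph H" "f1 \<in> hE H" "f2 \<in> hE H" "x \<in> f1" "y \<in> f2"
    and "(adj_avoiding H R)\<^sup>*\<^sup>* x y"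
  shows "\<exists>es vs. hpath H es vs \<and> hd es = f1 \<and> last es = f2 \<and>
           (\<forall>e\<in>set es. e \<in> R \<longrightarrow> e = f1 \<or> e = f2)"
proof -
  define F where "F = insert f1 (insert f2 (hE H - R))"
  have "(incidence F)\<^sup>*\<^sup>* (Inl f1) (Inr y)"
    using assms(6)
  proof induction
    case base
    show ?case using assms(4) unfolding F_def by (auto intro: incidenceI)
  next
    case (step y z)
    then obtain e where "e \<in> F" "y \<in> e" "z \<in> e" unfolding adj_avoiding_def F_def by blast
    with step.IH show ?case by (meson incidenceI rtranclp.rtrancl_into_rtrancl)
  qed
  moreover have "incidence F (Inr y) (Inl f2)" using assms(5) unfolding F_def by (auto intro: incidenceI)
  ultimately have "(incidence F)\<^sup>*\<^sup>* (Inl f1) (Inl f2)" by simp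
  then obtain xs where "rtrancl_path (incidence F) (Inl f1) xs (Inl f2)"
    unfolding rtranclp_eq_rtrancl_path by blast
  then obtain xs' where path: "rtrancl_path (incidence F) (Inl f1) xs' (Inl f2)"
    and distinct: "distinct (Inl f1 # xs')"
    by (rule rtrancl_path_distinct)
  have "F \<subseteq> hE H" "f1 \<in> F" using assms(2,3) unfolding F_def by auto
  from hpath_of_incidence_path[OF assms(1) this path distinct]
  obtain es vs where "hpath H es vs" "hd es = f1" "last es = f2" "set es \<subseteq> F"
    by (elim exE conjE)
  moreover have "\<forall>e\<in>set es. e \<in> R \<longrightarrow> e = f1 \<or> e = f2"
    using \<open>set es \<subseteq> F\<close> unfolding F_def by blast
  ultimately show ?thesis by blast
qed

section \<open>Counting\<close>

lemma exists_not_in_image: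
  assumes "inj_on h A" "finite D" "card D < card A"
  shows "\<exists>a\<in>A. h a \<notin> p ` D"
proof (rule ccontr)
  assume "\<not> ?thesis"
  then have "h ` A \<subseteq> p ` D" by blast
  then have "card (h ` A) \<le> card D"
    using assms(2) by (meson card_image_le card_mono finite_imageI order_trans)
  then show False using assms(1,3) by (simp add: card_image)
qed

lemma card_PiE_fix_two:
  assumes "finite I" "i \<in> I" "i' \<in> I" "i \<noteq> i'"
  shows "card {g \<in> PiE I (\<lambda>_. {..<L::nat}). g i = t \<and> g i' = t'} \<le> L ^ (card I - 2)"
proof -
  define B where "B j = (if j = i then {t} else if j = i' then {t'} else {..<L})" for j
  have "{g \<in> PiE I (\<lambda>_. {..<L}). g i = t \<and> g i' = t'} \<subseteq> PiE I B"
    unfolding B_def by (auto simp: PiE_iff extensional_def)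
  then have "card {g \<in> PiE I (\<lambda>_. {..<L}). g i = t \<and> g i' = t'} \<le> card (PiE I B)"
    using assms(1) by (intro card_mono) (auto simp: B_def finite_PiE)
  also have "card (PiE I B) = (\<Prod>j\<in>I. card (B j))"
    using assms(1) by (rule card_PiE)
  also have "\<dots> = (\<Prod>j\<in>I - {i, i'}. card (B j))"
    using assms by (intro prod.mono_neutral_right) (auto simp: B_def)
  also have "\<dots> = L ^ (card I - 2)"
    using assms by (simp add: B_def card_Diff_subset numeral_2_eq_2)
  finally show ?thesis .
qed

text \<open>A choice function is bad if some (i', g i') conflicts with (i, g i); each of the
  card I * L candidates (i', t') accounts for at most d * L ^ (card I - 2) bad functions, fewer
  than L ^ card I in total.\<close>
lemma conflict_free_choice:
  fixes conflict :: "'i \<Rightarrow> nat \<Rightarrow> 'i \<Rightarrow> nat \<Rightarrow> bool"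
  assumes "finite I"
    and deg: "\<And>i' t'. i' \<in> I \<Longrightarrow> t' < L \<Longrightarrow> card {(i, t) \<in> I \<times> {..<L}. conflict i' t' i t} \<le> d"
    and "card I * d < L"
  obtains g where "\<forall>i\<in>I. g i < L" "\<forall>i\<in>I. \<forall>i'\<in>I. i \<noteq> i' \<longrightarrow> \<not> conflict i' (g i') i (g i)"
proof (cases "card I \<le> 1")
  case True
  then have "\<forall>i\<in>I. \<forall>i'\<in>I. i = i'" using assms(1) card_le_Suc0_iff_eq by auto
  with that[of "\<lambda>_. 0"] show thesis using assms(3) by auto
next
  case False
  define N where "N = card I"
  let ?P = "PiE I (\<lambda>_. {..<L})"
  let ?C = "I \<times> {..<L}"
  let ?fix = "\<lambda>i t i' t'. {g \<in> ?P. g i = t \<and> g i' = t'}"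
  define Bad where "Bad = (\<Union>(i', t')\<in>?C. \<Union>(i, t)\<in>{(i, t) \<in> ?C. conflict i' t' i t \<and> i \<noteq> i'}. ?fix i t i' t')"
  have "finite ?C" using assms(1) by simp
  then have fin: "finite {(i, t) \<in> ?C. Q i t}" for Q
    by (rule finite_subset[rotated]) blast
  have "card Bad \<le> (\<Sum>(i', t')\<in>?C. \<Sum>(i, t)\<in>{(i, t) \<in> ?C. conflict i' t' i t \<and> i \<noteq> i'}. card (?fix i t i' t'))"
    unfolding Bad_def using assms(1) fin
    by (auto intro!: order.trans[OF card_UN_le] sum_mono card_UN_le simp: case_prod_beta)
  also have "\<dots> \<le> (\<Sum>(i', t')\<in>?C. d * L ^ (N - 2))"
  proof (rule sum_mono, clarify)
    fix i' t' assume c': "i' \<in> I" "t' < L"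
    let ?K = "{(i, t) \<in> ?C. conflict i' t' i t \<and> i \<noteq> i'}"
    have "(\<Sum>(i, t)\<in>?K. card (?fix i t i' t')) \<le> (\<Sum>(i, t)\<in>?K. L ^ (N - 2))"
      using assms(1) c' unfolding N_def by (intro sum_mono) (auto intro: card_PiE_fix_two)
    also have "\<dots> = card ?K * L ^ (N - 2)" by simp
    also have "card ?K \<le> card {(i, t) \<in> ?C. conflict i' t' i t}"
      using fin by (intro card_mono) auto
    also have "\<dots> \<le> d" by (rule deg[OF c'])
    finally show "(\<Sum>(i, t)\<in>?K. card (?fix i t i' t')) \<le> d * L ^ (N - 2)"
      by (simp add: mult_right_mono)
  qed
  also have "\<dots> = N * L * d * L ^ (N - 2)"
    using assms(1) by (simp add: N_def card_cartesian_product)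
  also have "\<dots> < L * L * L ^ (N - 2)"
    using assms(3) unfolding N_def by (simp add: algebra_simps)
  also have "\<dots> = L ^ Suc (Suc (N - 2))" by (simp only: power_Suc mult.assoc)
  also have "Suc (Suc (N - 2)) = N" using False unfolding N_def by arith
  also have "L ^ N = card ?P" using assms(1) by (simp add: card_PiE N_def)
  finally have "card Bad < card ?P" .
  moreover have "Bad \<subseteq> ?P" unfolding Bad_def by blast
  ultimately have "\<not> ?P \<subseteq> Bad" by auto
  then obtain g where g: "g \<in> ?P" "g \<notin> Bad" by blast
  show thesis
  proof (rule that)
    show "\<forall>i\<in>I. g i < L" using g(1) by auto
    show "\<forall>i\<in>I. \<forall>i'\<in>I. i \<noteq> i' \<longrightarrow> \<not> conflict i' (g i') i (g i)"
      using g unfolding Bad_def by fastforce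
  qed
qed

definition grid_edge_ix :: "nat \<Rightarrow> (bool \<times> nat \<times> nat) set" where
  "grid_edge_ix n = {(d, I, J). I < n \<and> J < n \<and> (if d then Suc J < n else Suc I < n)}"

fun ix_src :: "bool \<times> nat \<times> nat \<Rightarrow> nat \<times> nat" where
  "ix_src (_, I, J) = (I, J)"

fun ix_tgt :: "bool \<times> nat \<times> nat \<Rightarrow> nat \<times> nat" where
  "ix_tgt (d, I, J) = (if d then (I, Suc J) else (Suc I, J))"

definition ix_edge :: "bool \<times> nat \<times> nat \<Rightarrow> (nat \<times> nat) set" where
  "ix_edge i = {ix_src i, ix_tgt i}"

lemma grid_edge_ix_cases:
  assumes "i \<in> grid_edge_ix n"
  obtains (down) I J where "i = (False, I, J)" "Suc I < n" "J < n"
    | (right) I J where "i = (True, I, J)" "I < n" "Suc J < n"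
  using assms unfolding grid_edge_ix_def by (cases i) (auto split: if_splits)

lemma grid_edge_ix_subset: "grid_edge_ix n \<subseteq> UNIV \<times> {..<n} \<times> {..<n}"
  unfolding grid_edge_ix_def by auto

lemma finite_grid_edge_ix: "finite (grid_edge_ix n)"
  using grid_edge_ix_subset by (rule finite_subset) simp

lemma grid_vertices: "fst (grid n) = {0..<n} \<times> {0..<n}"
  by (simp add: grid_def)

lemma grid_edges_eq_image: "snd (grid n) = ix_edge ` grid_edge_ix n"
proof
  show "snd (grid n) \<subseteq> ix_edge ` grid_edge_ix n"
  proof
    fix X assume "X \<in> snd (grid n)"
    then obtain i j i' j' where X: "X = {(i, j), (i', j')}" "i < n" "j < n" "i' < n" "j' < n"
      "(i' = Suc i \<and> j' = j) \<or> (i' = i \<and> j' = Suc j)" unfolding grid_def by auto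
    then have "(False, i, j) \<in> grid_edge_ix n \<and> X = ix_edge (False, i, j) \<or>
               (True, i, j) \<in> grid_edge_ix n \<and> X = ix_edge (True, i, j)"
      unfolding grid_edge_ix_def ix_edge_def by auto
    then show "X \<in> ix_edge ` grid_edge_ix n" by blast
  qed
  show "ix_edge ` grid_edge_ix n \<subseteq> snd (grid n)"
    by (auto elim!: grid_edge_ix_cases simp: ix_edge_def grid_edge_down grid_edge_right)
qed

lemma inj_on_ix_edge: "inj_on ix_edge (grid_edge_ix n)"
  by (rule inj_onI) (auto elim!: grid_edge_ix_cases simp: ix_edge_def doubleton_eq_iff)

lemma block_side_bound:
  assumes "1 \<le> r" "1 \<le> n"
  shows "2 * card (grid_edge_ix n) * r + 2 \<le> 4 * r ^ 6 * n ^ 4"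
proof (cases "n = 1")
  case True
  then have "grid_edge_ix n = {}" unfolding grid_edge_ix_def by auto
  moreover have "1 \<le> r ^ 6 * n ^ 4" using assms by (simp add: one_le_power)
  then have "2 \<le> 4 * (r ^ 6 * n ^ 4)" by linarith
  ultimately show ?thesis by (simp only: card.empty mult_0_right add_0 mult.assoc)
next
  case False
  then have n2: "2 \<le> n" using assms(2) by simp
  have "card (grid_edge_ix n) \<le> card (UNIV \<times> {..<n} \<times> {..<n} :: (bool \<times> nat \<times> nat) set)"
    using grid_edge_ix_subset by (rule card_mono[rotated]) simp
  then have "card (grid_edge_ix n) \<le> 2 * (n * n)" by (simp add: card_cartesian_product)
  then have "2 * card (grid_edge_ix n) * r \<le> 4 * (n * n * r)" by simp
  moreover have "4 \<le> n * n" using mult_le_mono[OF n2 n2] by simp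
  moreover have "n * n \<le> n * n * r" using mult_le_mono2[OF assms(1)] by simp
  ultimately have "2 * card (grid_edge_ix n) * r + 2 \<le> 6 * (n * n * r)" by linarith
  also have "\<dots> \<le> 4 * (n * n) * (n * n * r)"
    using \<open>4 \<le> n * n\<close> by (intro mult_le_mono1) linarith
  also have "\<dots> \<le> 4 * (n * n) * (n * n * r ^ 6)"
    using assms(1) by (simp add: self_le_power)
  finally show ?thesis by (simp add: power4_eq_xxxx mult_ac)
qed

section \<open>Blocks and spines\<close>

lemma mult_add_eq_iff:
  fixes s :: nat
  assumes "off < s" "off' < s"
  shows "I * s + off = I' * s + off' \<longleftrightarrow> I = I' \<and> off = off'"
proof
  assume eq: "I * s + off = I' * s + off'"
  have "(I * s + off) div s = I" "(I' * s + off') div s = I'"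
    using assms by (simp_all add: div_nat_eqI algebra_simps)
  then show "I = I' \<and> off = off'" using eq by simp
qed simp

locale grid_blocks =
  fixes H :: "'v hypergraph" and n m s :: nat and \<nu> :: "nat \<times> nat \<Rightarrow> 'v set"
  assumes hypergraph: "hypergraph H" and finite_vertices: "finite (hV H)"
    and minor: "minor_map (grid m) (primal_graph H) \<nu>"
    and n_pos: "0 < n" and blocks_fit: "n * s \<le> m"
    and block_side_large: "2 * card (grid_edge_ix n) * hrank H + 2 \<le> s"
begin

abbreviation "r \<equiv> hrank H"
abbreviation "ix \<equiv> grid_edge_ix n"
abbreviation "cells \<equiv> fst (grid m)"

text \<open>L exceeds the number of cells met by one hyperedge per edge of the n x n grid.\<close>
definition L :: nat where "L = card ix * r + 1"

lemma two_L_le_s: "2 * L \<le> s"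
  using block_side_large unfolding L_def by simp

lemma s_pos: "0 < s"
  using two_L_le_s unfolding L_def by simp

lemma mem_cells: "a \<in> cells \<longleftrightarrow> fst a < m \<and> snd a < m"
  by (cases a) (simp add: grid_vertices)

lemma nu_connected: "a \<in> cells \<Longrightarrow> connected_in (primal_graph H) (\<nu> a)"
  using minor unfolding minor_map_def by blast

lemma nu_disjoint: "a \<in> cells \<Longrightarrow> b \<in> cells \<Longrightarrow> a \<noteq> b \<Longrightarrow> \<nu> a \<inter> \<nu> b = {}"
  using minor unfolding minor_map_def by blast

lemma nu_adjacent: "{a, b} \<in> snd (grid m) \<Longrightarrow> \<exists>x\<in>\<nu> a. \<exists>y\<in>\<nu> b. {x, y} \<in> snd (primal_graph H)"
  using minor unfolding minor_map_def by blast

lemma nu_adjacent_edge: "{a, b} \<in> snd (grid m) \<Longrightarrow> \<exists>x\<in>\<nu> a. \<exists>y\<in>\<nu> b. \<exists>e\<in>hE H. x \<in> e \<and> y \<in> e"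
  using nu_adjacent primal_edge_iff by metis

lemma nu_cover: "\<Union> (\<nu> ` cells) = hV H"
  using minor unfolding minor_map_def by (simp add: primal_graph_def)

lemma nu_nonempty: "a \<in> cells \<Longrightarrow> \<nu> a \<noteq> {}"
  using nu_connected unfolding connected_in_def by blast

lemma nu_inner_path:
  "a \<in> cells \<Longrightarrow> x \<in> \<nu> a \<Longrightarrow> y \<in> \<nu> a \<Longrightarrow> (adj_within (primal_graph H) (\<nu> a))\<^sup>*\<^sup>* x y"
  using nu_connected unfolding connected_in_iff_adj_within by blast

definition block :: "nat \<Rightarrow> nat" where
  "block y = min (y div s) (n - 1)"

definition block_of :: "nat \<times> nat \<Rightarrow> nat \<times> nat" where
  "block_of a = (block (fst a), block (snd a))"

lemma block_eq: "I < n \<Longrightarrow> off < s \<Longrightarrow> block (I * s + off) = I"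
  unfolding block_def by (simp add: div_nat_eqI algebra_simps)

lemma block_lt: "block y < n"
  unfolding block_def using n_pos by simp

lemma block_mono: "y \<le> y' \<Longrightarrow> block y \<le> block y'"
  unfolding block_def by (simp add: div_le_mono min.coboundedI1)

lemma block_between:
  assumes "block y1 = c" "block y2 = c" "min y1 y2 \<le> y" "y \<le> max y1 y2"
  shows "block y = c"
  using assms block_mono[of "min y1 y2" y] block_mono[of y "max y1 y2"]
  by (auto simp: min_def max_def split: if_splits)

lemma block_coord_lt: "I < n \<Longrightarrow> off < s \<Longrightarrow> I * s + off < m"
proof -
  assume "I < n" "off < s"
  then have "I * s + off < Suc I * s" by simp
  also have "\<dots> \<le> n * s" using \<open>I < n\<close> by (intro mult_right_mono) auto
  finally show ?thesis using blocks_fit by simp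
qed

text \<open>For the grid edge i from block u = ix_src i to block v = ix_tgt i, spine i t is the
  segment of cells of u at offset t perpendicular to the border between u and v: spine i t k lies
  k cells away from that border, and spine i t 0 is adjacent to bridge i t in v. The coordinate
  that varies along these spines is along i.\<close>
definition spine :: "bool \<times> nat \<times> nat \<Rightarrow> nat \<Rightarrow> nat \<Rightarrow> nat \<times> nat" where
  "spine i t k = (case i of (d, I, J) \<Rightarrow>
     if d then (I * s + t, J * s + (s - Suc k)) else (I * s + (s - Suc k), J * s + t))"

definition bridge :: "bool \<times> nat \<times> nat \<Rightarrow> nat \<Rightarrow> nat \<times> nat" where
  "bridge i t = (case i of (d, I, J) \<Rightarrow> if d then (I * s + t, Suc J * s) else (Suc I * s, J * s + t))"

definition along :: "bool \<times> nat \<times> nat \<Rightarrow> nat \<times> nat \<Rightarrow> nat" where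
  "along i a = (if fst i then snd a else fst a)"

lemma offsets_lt:
  assumes "t < L" "k < L"
  shows "t < s" "s - Suc k < s" "t < s - Suc k"
  using assms two_L_le_s by auto

lemma spine_in_cells: "i \<in> ix \<Longrightarrow> t < L \<Longrightarrow> k < L \<Longrightarrow> spine i t k \<in> cells"
  by (erule grid_edge_ix_cases) (auto simp: spine_def mem_cells intro!: block_coord_lt offsets_lt)

lemma block_of_spine: "i \<in> ix \<Longrightarrow> t < L \<Longrightarrow> k < L \<Longrightarrow> block_of (spine i t k) = ix_src i"
  by (erule grid_edge_ix_cases) (auto simp: spine_def block_of_def intro!: block_eq offsets_lt)

lemma bridge_in_cells: "i \<in> ix \<Longrightarrow> t < L \<Longrightarrow> bridge i t \<in> cells"
  using block_coord_lt[of _ 0] s_pos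
  by (elim grid_edge_ix_cases) (auto simp: bridge_def mem_cells simp del: mult_Suc intro!: block_coord_lt offsets_lt)

lemma block_of_bridge: "i \<in> ix \<Longrightarrow> t < L \<Longrightarrow> block_of (bridge i t) = ix_tgt i"
  using block_eq[of _ 0] s_pos
  by (elim grid_edge_ix_cases) (auto simp: bridge_def block_of_def simp del: mult_Suc intro!: block_eq offsets_lt)

lemma spine_bridge_adjacent:
  assumes "i \<in> ix" "t < L"
  shows "{spine i t 0, bridge i t} \<in> snd (grid m)"
proof -
  have last: "Suc (I * s + (s - Suc 0)) = Suc I * s" for I using s_pos by simp
  have "Suc I * s + 0 < m" if "Suc I < n" for I using that s_pos by (intro block_coord_lt)
  moreover have "I * s + t < m" if "I < n" for I using that assms(2) by (intro block_coord_lt offsets_lt)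
  ultimately show ?thesis
    using assms(1) grid_edge_down[of "_ * s + (s - Suc 0)" m] grid_edge_right[of _ m "_ * s + (s - Suc 0)"]
    by (elim grid_edge_ix_cases) (auto simp: spine_def bridge_def last simp del: mult_Suc)
qed

lemma spine_step_adjacent:
  assumes "i \<in> ix" "t < L" "Suc k < L"
  shows "{spine i t k, spine i t (Suc k)} \<in> snd (grid m)"
proof -
  have step: "Suc (I * s + (s - Suc (Suc k))) = I * s + (s - Suc k)" for I
    using assms(3) two_L_le_s by simp
  have "I * s + (s - Suc k) < m" if "I < n" for I using that assms(3) by (intro block_coord_lt offsets_lt) auto
  moreover have "I * s + t < m" if "I < n" for I using that assms(2) by (intro block_coord_lt offsets_lt)
  ultimately show ?thesis
    using assms(1) grid_edge_down[of "_ * s + (s - Suc (Suc k))" m] grid_edge_right[of _ m "_ * s + (s - Suc (Suc k))"]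
    by (elim grid_edge_ix_cases) (auto simp: spine_def step insert_commute)
qed

text \<open>Spines of different edges cannot meet, even inside a common block: a spine runs at
  offset t < L across the block and at offset at least L along it.\<close>
lemma spine_inj:
  assumes "i \<in> ix" "i' \<in> ix" "t < L" "t' < L" "k < L" "k' < L" "spine i t k = spine i' t' k'"
  shows "i = i' \<and> t = t'"
proof -
  note lt = offsets_lt[OF assms(3,5)] offsets_lt[OF assms(4,6)] offsets_lt[OF assms(3,6)] offsets_lt[OF assms(4,5)]
  from assms(1,2) show ?thesis
    using assms(7) lt
    by (elim grid_edge_ix_cases) (auto simp: spine_def mult_add_eq_iff simp del: add_diff_assoc)
qed

lemma inj_on_along_spine: "i \<in> ix \<Longrightarrow> t < L \<Longrightarrow> inj_on (\<lambda>k. along i (spine i t k)) {..<L}"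
  using two_L_le_s by (elim grid_edge_ix_cases) (auto simp: inj_on_def along_def spine_def)

definition bridge_edge :: "bool \<times> nat \<times> nat \<Rightarrow> nat \<Rightarrow> 'v set" where
  "bridge_edge i t = (SOME e. e \<in> hE H \<and> e \<inter> \<nu> (spine i t 0) \<noteq> {} \<and> e \<inter> \<nu> (bridge i t) \<noteq> {})"

definition cells_meeting :: "'v set \<Rightarrow> (nat \<times> nat) set" where
  "cells_meeting e = {a \<in> cells. \<nu> a \<inter> e \<noteq> {}}"

definition spoils :: "bool \<times> nat \<times> nat \<Rightarrow> nat \<Rightarrow> bool \<times> nat \<times> nat \<Rightarrow> nat \<Rightarrow> bool" where
  "spoils i' t' i t \<longleftrightarrow> cells_meeting (bridge_edge i' t') \<inter> spine i t ` {..<L} \<noteq> {}"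

lemma bridge_edge:
  assumes "i \<in> ix" "t < L"
  shows "bridge_edge i t \<in> hE H" "bridge_edge i t \<inter> \<nu> (spine i t 0) \<noteq> {}"
    "bridge_edge i t \<inter> \<nu> (bridge i t) \<noteq> {}"
proof -
  have "\<exists>e. e \<in> hE H \<and> e \<inter> \<nu> (spine i t 0) \<noteq> {} \<and> e \<inter> \<nu> (bridge i t) \<noteq> {}"
    using nu_adjacent_edge[OF spine_bridge_adjacent[OF assms]] by blast
  then have "bridge_edge i t \<in> hE H \<and> bridge_edge i t \<inter> \<nu> (spine i t 0) \<noteq> {} \<and>
      bridge_edge i t \<inter> \<nu> (bridge i t) \<noteq> {}"
    unfolding bridge_edge_def by (rule someI_ex)
  then show "bridge_edge i t \<in> hE H" "bridge_edge i t \<inter> \<nu> (spine i t 0) \<noteq> {}"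
    "bridge_edge i t \<inter> \<nu> (bridge i t) \<noteq> {}" by blast+
qed

lemma finite_cells_meeting: "finite (cells_meeting e)"
  by (rule finite_subset[of _ cells]) (auto simp: cells_meeting_def grid_vertices)

text \<open>Branch sets are disjoint, so an edge meets at most as many of them as it has vertices.\<close>
lemma card_cells_meeting_le:
  assumes "e \<in> hE H"
  shows "card (cells_meeting e) \<le> r"
proof -
  define pick where "pick a = (SOME x. x \<in> \<nu> a \<inter> e)" for a
  have pick: "pick a \<in> \<nu> a \<inter> e" if "a \<in> cells_meeting e" for a
    unfolding pick_def by (rule someI_ex) (use that in \<open>auto simp: cells_meeting_def\<close>)
  have "inj_on pick (cells_meeting e)"
  proof (rule inj_onI)
    fix a b assume ab: "a \<in> cells_meeting e" "b \<in> cells_meeting e" "pick a = pick b"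
    then have "\<nu> a \<inter> \<nu> b \<noteq> {}" using pick by (metis IntD1 disjoint_iff)
    then show "a = b" using ab nu_disjoint[of a b] unfolding cells_meeting_def by blast
  qed
  moreover have "pick ` cells_meeting e \<subseteq> e" using pick by blast
  moreover have "finite e"
    using assms hypergraph finite_vertices unfolding hypergraph_def by (meson PowD finite_subset subsetD)
  ultimately have "card (cells_meeting e) \<le> card e" by (rule card_inj_on_le)
  also have "\<dots> \<le> r" using card_le_hrank hypergraph finite_vertices assms .
  finally show ?thesis .
qed

lemma card_spoiled_le:
  assumes "i' \<in> ix" "t' < L"
  shows "card {(i, t) \<in> ix \<times> {..<L}. spoils i' t' i t} \<le> r"
proof -
  let ?K = "{(i, t) \<in> ix \<times> {..<L}. spoils i' t' i t}"
  let ?M = "cells_meeting (bridge_edge i' t')"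
  define pick where "pick c = (SOME a. a \<in> ?M \<inter> spine (fst c) (snd c) ` {..<L})" for c
  have pick: "pick c \<in> ?M \<inter> spine (fst c) (snd c) ` {..<L}" if c: "c \<in> ?K" for c
  proof -
    obtain a where "a \<in> ?M \<inter> spine (fst c) (snd c) ` {..<L}"
      using c unfolding spoils_def by (auto simp: case_prod_beta)
    then show ?thesis unfolding pick_def by (rule someI)
  qed
  have "inj_on pick ?K"
  proof (rule inj_onI)
    fix c1 c2 assume c: "c1 \<in> ?K" "c2 \<in> ?K" "pick c1 = pick c2"
    obtain k1 k2 where k: "k1 < L" "k2 < L" "spine (fst c1) (snd c1) k1 = spine (fst c2) (snd c2) k2"
      using pick[OF c(1)] pick[OF c(2)] c(3) by auto
    have "fst c1 = fst c2 \<and> snd c1 = snd c2"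
      by (rule spine_inj[OF _ _ _ _ k]) (use c(1,2) in auto)
    then show "c1 = c2" by (simp add: prod_eq_iff)
  qed
  moreover have "pick ` ?K \<subseteq> ?M" using pick by blast
  ultimately have "card ?K \<le> card ?M" using finite_cells_meeting by (rule card_inj_on_le)
  also have "\<dots> \<le> r" using card_cells_meeting_le bridge_edge(1)[OF assms] .
  finally show ?thesis .
qed

lemma exists_good_choice:
  obtains g where "\<And>i. i \<in> ix \<Longrightarrow> g i < L"
    and "\<And>i i'. i \<in> ix \<Longrightarrow> i' \<in> ix \<Longrightarrow> i \<noteq> i' \<Longrightarrow> \<not> spoils i' (g i') i (g i)"
proof (rule conflict_free_choice[of ix L spoils r])
  show "card ix * r < L" unfolding L_def by simp
qed (use finite_grid_edge_ix card_spoiled_le that in blast)+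

definition block_cells :: "nat \<times> nat \<Rightarrow> (nat \<times> nat) set" where
  "block_cells u = {a \<in> cells. block_of a = u}"

definition branch :: "nat \<times> nat \<Rightarrow> 'v set" where
  "branch u = \<Union> (\<nu> ` block_cells u)"

lemma connected_block_cells:
  assumes "u \<in> fst (grid n)"
  shows "connected_in (grid m) (block_cells u)"
proof -
  obtain p q where u: "u = (p, q)" by (cases u)
  have "p < n" "q < n" using assms u by (auto simp: grid_vertices)
  then have "p * s + 0 < m" "q * s + 0 < m" "block (p * s + 0) = p" "block (q * s + 0) = q"
    using s_pos by (simp_all only: block_coord_lt block_eq)
  then have "(p * s + 0, q * s + 0) \<in> block_cells u"
    by (simp add: block_cells_def mem_cells block_of_def u)
  moreover have "(adj_within (grid m) (block_cells u))\<^sup>*\<^sup>* a b"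
    if "a \<in> block_cells u" "b \<in> block_cells u" for a b
  proof -
    obtain y1 x1 y2 x2 where ab: "a = (y1, x1)" "b = (y2, x2)" by (cases a, cases b)
    have lt: "y1 < m" "x1 < m" "y2 < m" "x2 < m"
      and blk: "block y1 = p" "block x1 = q" "block y2 = p" "block x2 = q"
      using that unfolding ab u block_cells_def block_of_def by (simp_all add: mem_cells)
    have "(adj_within (grid m) (block_cells u))\<^sup>*\<^sup>* (y1, x1) (y1, x2)"
      using lt blk block_between[of x1 q x2]
      by (intro grid_row_path) (auto simp: u block_cells_def block_of_def mem_cells)
    also have "(adj_within (grid m) (block_cells u))\<^sup>*\<^sup>* (y1, x2) (y2, x2)"
      using lt blk block_between[of y1 p y2]
      by (intro grid_col_path) (auto simp: u block_cells_def block_of_def mem_cells)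
    finally show ?thesis using ab by simp
  qed
  ultimately show ?thesis
    unfolding connected_in_iff_adj_within block_cells_def by blast
qed

lemma branch_disjoint: "u \<noteq> v \<Longrightarrow> branch u \<inter> branch v = {}"
  unfolding branch_def block_cells_def using nu_disjoint by fastforce

lemma minor_map_branch: "minor_map (grid n) (primal_graph H) branch"
  unfolding minor_map_def
proof (intro conjI ballI allI impI)
  show "connected_in (primal_graph H) (branch u)" if "u \<in> fst (grid n)" for u
    unfolding branch_def
  proof (rule connected_in_UN_branch_sets[OF connected_block_cells[OF that]])
    show "connected_in (primal_graph H) (\<nu> a)" if "a \<in> block_cells u" for a
      using that nu_connected unfolding block_cells_def by blast
  qed (fact nu_adjacent)
  show "branch u \<inter> branch v = {}" if "u \<noteq> v" for u v
    using branch_disjoint that .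
  show "\<exists>x\<in>branch u. \<exists>y\<in>branch v. {x, y} \<in> snd (primal_graph H)" if "{u, v} \<in> snd (grid n)" for u v
  proof -
    have "{u, v} \<in> ix_edge ` ix" using that grid_edges_eq_image by simp
    then obtain i where i: "i \<in> ix" "{u, v} = {ix_src i, ix_tgt i}"
      unfolding ix_edge_def by blast
    have L: "0 < L" unfolding L_def by simp
    have "spine i 0 0 \<in> block_cells (ix_src i)" "bridge i 0 \<in> block_cells (ix_tgt i)"
      using i(1) L spine_in_cells block_of_spine bridge_in_cells block_of_bridge
      unfolding block_cells_def by auto
    moreover obtain x y where "x \<in> \<nu> (spine i 0 0)" "y \<in> \<nu> (bridge i 0)" "{x, y} \<in> snd (primal_graph H)"
      using nu_adjacent[OF spine_bridge_adjacent[OF i(1) L]] by blast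
    ultimately have "\<exists>x\<in>branch (ix_src i). \<exists>y\<in>branch (ix_tgt i). {x, y} \<in> snd (primal_graph H)"
      unfolding branch_def by blast
    then show ?thesis using i(2) by (metis doubleton_eq_iff insert_commute)
  qed
  show "\<Union> (branch ` fst (grid n)) = fst (primal_graph H)"
  proof -
    have "block_of a \<in> fst (grid n)" for a
      using block_lt by (simp add: grid_vertices block_of_def)
    then have "\<Union> (branch ` fst (grid n)) = \<Union> (\<nu> ` cells)"
      unfolding branch_def block_cells_def by blast
    then show ?thesis using nu_cover by (simp add: primal_graph_def)
  qed
qed

end

section \<open>Paths between the chosen edges\<close>

locale good_choice = grid_blocks H n m s \<nu>
  for H :: "'v hypergraph" and n m s :: nat and \<nu> :: "nat \<times> nat \<Rightarrow> 'v set" +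
  fixes g :: "bool \<times> nat \<times> nat \<Rightarrow> nat"
  assumes g_lt: "\<And>i. i \<in> ix \<Longrightarrow> g i < L"
    and unspoiled: "\<And>i i'. i \<in> ix \<Longrightarrow> i' \<in> ix \<Longrightarrow> i \<noteq> i' \<Longrightarrow> \<not> spoils i' (g i') i (g i)"
begin

definition chosen :: "bool \<times> nat \<times> nat \<Rightarrow> 'v set" where
  "chosen i = bridge_edge i (g i)"

definition damaged :: "(nat \<times> nat) set" where
  "damaged = (\<Union>i\<in>ix. cells_meeting (chosen i))"

abbreviation "chosen_edges \<equiv> chosen ` ix"
abbreviation "clean \<equiv> cells - damaged"

lemma chosen_in_edges: "i \<in> ix \<Longrightarrow> chosen i \<in> hE H"
  unfolding chosen_def using bridge_edge g_lt by blast

lemma spine_start_meets_chosen: "i \<in> ix \<Longrightarrow> spine i (g i) 0 \<in> cells_meeting (chosen i)"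
  unfolding cells_meeting_def chosen_def
  using bridge_edge(2) spine_in_cells g_lt by (simp add: inf_commute L_def)

lemma spine_avoids_other_chosen:
  "i \<in> ix \<Longrightarrow> i' \<in> ix \<Longrightarrow> i \<noteq> i' \<Longrightarrow> k < L \<Longrightarrow> spine i (g i) k \<notin> cells_meeting (chosen i')"
  using unspoiled unfolding spoils_def chosen_def by blast

lemma inj_on_chosen: "inj_on chosen ix"
proof (rule inj_onI)
  fix i i' assume "i \<in> ix" "i' \<in> ix" "chosen i = chosen i'"
  moreover have "0 < L" unfolding L_def by simp
  ultimately show "i = i'"
    using spine_start_meets_chosen[of i] spine_avoids_other_chosen[of i i' 0] by auto
qed

lemma finite_damaged: "finite damaged"
  unfolding damaged_def using finite_grid_edge_ix finite_cells_meeting by blast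

lemma card_damaged_lt: "card damaged < L"
proof -
  have "card damaged \<le> (\<Sum>i\<in>ix. card (cells_meeting (chosen i)))"
    unfolding damaged_def by (rule card_UN_le[OF finite_grid_edge_ix])
  also have "\<dots> \<le> (\<Sum>i\<in>ix. r)"
    by (rule sum_mono) (simp add: card_cells_meeting_le chosen_in_edges)
  finally show ?thesis unfolding L_def by simp
qed

lemma L_le_m: "L \<le> m"
proof -
  have "s \<le> n * s" using n_pos by simp
  then show ?thesis using two_L_le_s blocks_fit by linarith
qed

lemma clean_cross:
  obtains w z where "w < m" "z < m" "\<forall>x<m. (w, x) \<in> clean" "\<forall>y<m. (y, z) \<in> clean"
proof -
  obtain w where "w < m" "w \<notin> fst ` damaged"
    using exists_not_in_image[of id "{..<m}" damaged fst] finite_damaged card_damaged_lt L_le_m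
    by auto
  moreover obtain z where "z < m" "z \<notin> snd ` damaged"
    using exists_not_in_image[of id "{..<m}" damaged snd] finite_damaged card_damaged_lt L_le_m
    by auto
  ultimately show thesis
    using that[of w z] by (force simp: mem_cells)
qed

lemma free_spine_line:
  assumes "i \<in> ix"
  obtains k where "k < L" "along i (spine i (g i) k) \<notin> along i ` damaged"
  using exists_not_in_image[OF inj_on_along_spine[OF assms g_lt[OF assms]] finite_damaged]
    card_damaged_lt that by auto

lemma not_chosen_if_meets_clean: "e \<inter> \<nu> a \<noteq> {} \<Longrightarrow> a \<in> clean \<Longrightarrow> e \<notin> chosen_edges"
  unfolding damaged_def cells_meeting_def by blast

lemma adj_avoiding_primal_edge:
  assumes "{x, y} \<in> snd (primal_graph H)" "x \<in> \<nu> a" "a \<in> clean"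
  shows "adj_avoiding H chosen_edges x y"
proof -
  obtain e where "e \<in> hE H" "x \<in> e" "y \<in> e" using assms(1) primal_edge_iff by metis
  moreover have "e \<notin> chosen_edges" using not_chosen_if_meets_clean[of e a] assms(2,3) \<open>x \<in> e\<close> by blast
  ultimately show ?thesis unfolding adj_avoiding_def by blast
qed

lemma clean_inner_path:
  assumes "a \<in> clean" "x \<in> \<nu> a" "y \<in> \<nu> a"
  shows "(adj_avoiding H chosen_edges)\<^sup>*\<^sup>* x y"
proof -
  have "(adj_within (primal_graph H) (\<nu> a))\<^sup>*\<^sup>* x y" using nu_inner_path assms by blast
  moreover have "adj_within (primal_graph H) (\<nu> a) \<le> adj_avoiding H chosen_edges"
    using adj_avoiding_primal_edge assms(1) unfolding adj_within_def by blast
  ultimately show ?thesis by (metis rtranclp_mono predicate2D)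
qed

lemma clean_adjacent:
  assumes "{a, b} \<in> snd (grid m)" "b \<in> clean"
  shows "\<exists>x\<in>\<nu> a. \<exists>y\<in>\<nu> b. adj_avoiding H chosen_edges x y"
proof -
  obtain x y where "x \<in> \<nu> a" "y \<in> \<nu> b" "{x, y} \<in> snd (primal_graph H)"
    using nu_adjacent[OF assms(1)] by blast
  then show ?thesis
    using adj_avoiding_primal_edge[of y x b] assms(2) adj_avoiding_commute by (metis insert_commute)
qed

lemma clean_path_lifts:
  assumes "(adj_within (grid m) clean)\<^sup>*\<^sup>* a b" "a \<in> clean"
  shows "\<forall>x\<in>\<nu> a. \<forall>y\<in>\<nu> b. (adj_avoiding H chosen_edges)\<^sup>*\<^sup>* x y"
  using assms
proof (rule rtranclp_lift_branch_sets[rotated 2])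
  show "(adj_avoiding H chosen_edges)\<^sup>*\<^sup>* x y" if "c \<in> clean" "x \<in> \<nu> c" "y \<in> \<nu> c" for c x y
    using clean_inner_path that .
  show "\<exists>x\<in>\<nu> c. \<exists>y\<in>\<nu> d. (adj_avoiding H chosen_edges)\<^sup>*\<^sup>* x y"
    if "c \<in> clean" "d \<in> clean" "{c, d} \<in> snd (grid m)" for c d
    using clean_adjacent[OF that(3,2)] by blast
qed

lemma chosen_reaches_unshared_cell:
  assumes i: "i \<in> ix" and p: "p \<in> cells_meeting (chosen i)"
    and unshared: "\<And>i'. i' \<in> ix \<Longrightarrow> i' \<noteq> i \<Longrightarrow> p \<notin> cells_meeting (chosen i')"
    and z: "z \<in> \<nu> p"
  shows "\<exists>y\<in>chosen i. (adj_avoiding H chosen_edges)\<^sup>*\<^sup>* y z"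
proof -
  have "p \<in> cells" using p unfolding cells_meeting_def by blast
  obtain x0 where x0: "x0 \<in> \<nu> p" "x0 \<in> chosen i" using p unfolding cells_meeting_def by blast
  have "(adj_within (primal_graph H) (\<nu> p))\<^sup>*\<^sup>* x0 z" using nu_inner_path \<open>p \<in> cells\<close> x0 z by blast
  then show ?thesis
  proof induction
    case base
    then show ?case using x0 by blast
  next
    case (step u v)
    then obtain y where y: "y \<in> chosen i" "(adj_avoiding H chosen_edges)\<^sup>*\<^sup>* y u" by blast
    have uv: "u \<in> \<nu> p" "v \<in> \<nu> p" "{u, v} \<in> snd (primal_graph H)"
      using step(2) unfolding adj_within_def by auto
    then obtain e where e: "e \<in> hE H" "u \<in> e" "v \<in> e" using primal_edge_iff by metis
    show ?case
    proof (cases "e \<in> chosen_edges")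
      case True
      then obtain i' where "i' \<in> ix" "e = chosen i'" by blast
      moreover have "p \<in> cells_meeting e" using \<open>p \<in> cells\<close> uv e unfolding cells_meeting_def by blast
      ultimately have "e = chosen i" using unshared by blast
      then show ?thesis using e by blast
    next
      case False
      then have "adj_avoiding H chosen_edges u v" unfolding adj_avoiding_def using e by blast
      then show ?thesis using y by (meson rtranclp.rtrancl_into_rtrancl)
    qed
  qed
qed

lemma last_damaged_spine_cell:
  assumes i: "i \<in> ix" and k: "k < L" "spine i (g i) k \<notin> damaged"
  obtains j where "j < k" "spine i (g i) j \<in> cells_meeting (chosen i)"
    "\<And>j'. j < j' \<Longrightarrow> j' \<le> k \<Longrightarrow> spine i (g i) j' \<in> clean"
proof -
  define J where "J = {j. j < k \<and> spine i (g i) j \<in> damaged}"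
  have start: "spine i (g i) 0 \<in> damaged"
    using spine_start_meets_chosen[OF i] i unfolding damaged_def by blast
  then have "0 \<in> J" using k(2) unfolding J_def by (cases k) auto
  moreover have "finite J" unfolding J_def by simp
  ultimately have "Max J \<in> J" and above: "\<And>j'. j' \<in> J \<Longrightarrow> j' \<le> Max J" by (auto intro: Max_in)
  then have "Max J < k" "spine i (g i) (Max J) \<in> damaged" unfolding J_def by auto
  then obtain i' where "i' \<in> ix" "spine i (g i) (Max J) \<in> cells_meeting (chosen i')"
    unfolding damaged_def by blast
  then have "spine i (g i) (Max J) \<in> cells_meeting (chosen i)"
    using spine_avoids_other_chosen[OF i] \<open>Max J < k\<close> k(1) by (cases "i' = i") auto
  moreover have "spine i (g i) j' \<in> clean" if "Max J < j'" "j' \<le> k" for j'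
  proof -
    have "spine i (g i) j' \<in> cells" using spine_in_cells i g_lt that k(1) by simp
    moreover have "j' \<notin> J" using above[of j'] that(1) by fastforce
    then have "spine i (g i) j' \<notin> damaged"
      using that(2) k(2) unfolding J_def by (cases "j' = k") auto
    ultimately show ?thesis by blast
  qed
  ultimately show thesis using that \<open>Max J < k\<close> by blast
qed

lemma clean_path_from_spine:
  assumes i: "i \<in> ix" and k: "k < L" "along i (spine i (g i) k) \<notin> along i ` damaged"
    and cross: "w < m" "z < m" "\<forall>x<m. (w, x) \<in> clean" "\<forall>y<m. (y, z) \<in> clean"
  shows "(adj_within (grid m) clean)\<^sup>*\<^sup>* (spine i (g i) k) (w, z)"
proof -
  obtain y x where yx: "spine i (g i) k = (y, x)" by force
  then have "y < m" "x < m" using spine_in_cells[OF i g_lt[OF i] k(1)] by (simp_all add: mem_cells)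
  moreover have "(\<forall>x'<m. (y, x') \<in> clean) \<or> (\<forall>y'<m. (y', x) \<in> clean)"
  proof (cases "fst i")
    case True
    then have "along i (y', x) \<notin> along i ` damaged" for y' using k(2) yx by (simp add: along_def)
    then show ?thesis using \<open>x < m\<close> by (auto simp: mem_cells)
  next
    case False
    then have "along i (y, x') \<notin> along i ` damaged" for x' using k(2) yx by (simp add: along_def)
    then show ?thesis using \<open>y < m\<close> by (auto simp: mem_cells)
  qed
  ultimately show ?thesis using grid_path_via_cross cross yx by simp
qed

lemma chosen_reaches_cross:
  assumes i: "i \<in> ix"
    and cross: "w < m" "z < m" "\<forall>x<m. (w, x) \<in> clean" "\<forall>y<m. (y, z) \<in> clean"
    and x0: "x0 \<in> \<nu> (w, z)"
  shows "\<exists>y\<in>chosen i. (adj_avoiding H chosen_edges)\<^sup>*\<^sup>* y x0"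
proof -
  let ?sp = "spine i (g i)"
  obtain k where k: "k < L" "along i (?sp k) \<notin> along i ` damaged"
    using free_spine_line[OF i] .
  then have "?sp k \<notin> damaged" by blast
  then obtain j where j: "j < k" "?sp j \<in> cells_meeting (chosen i)"
    and tail: "\<And>j'. j < j' \<Longrightarrow> j' \<le> k \<Longrightarrow> ?sp j' \<in> clean"
    using last_damaged_spine_cell[OF i k(1)] by blast
  have "(adj_within (grid m) clean)\<^sup>*\<^sup>* (?sp (Suc j)) (?sp k)"
    using j(1) k(1) tail spine_step_adjacent[OF i g_lt[OF i]]
    by (intro rtranclp_chain[where h = ?sp]) (auto simp: adj_within_def)
  also have "(adj_within (grid m) clean)\<^sup>*\<^sup>* (?sp k) (w, z)"
    using clean_path_from_spine[OF i k cross] .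
  finally have "\<forall>y\<in>\<nu> (?sp (Suc j)). \<forall>x\<in>\<nu> (w, z). (adj_avoiding H chosen_edges)\<^sup>*\<^sup>* y x"
    using tail[of "Suc j"] j(1) by (intro clean_path_lifts) auto
  then have far: "\<forall>y\<in>\<nu> (?sp (Suc j)). (adj_avoiding H chosen_edges)\<^sup>*\<^sup>* y x0"
    using x0 by blast
  obtain x y where xy: "x \<in> \<nu> (?sp j)" "y \<in> \<nu> (?sp (Suc j))" "adj_avoiding H chosen_edges x y"
    using clean_adjacent[OF spine_step_adjacent[OF i g_lt[OF i]] tail[of "Suc j"]] j(1) k(1) by auto
  obtain y0 where "y0 \<in> chosen i" "(adj_avoiding H chosen_edges)\<^sup>*\<^sup>* y0 x"
    using chosen_reaches_unshared_cell[OF i j(2) _ xy(1)] spine_avoids_other_chosen[OF i] j(1) k(1)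
    by (metis order.strict_trans)
  with xy far show ?thesis by (meson converse_rtranclp_into_rtranclp rtranclp_trans)
qed

lemma chosen_linked:
  assumes "i1 \<in> ix" "i2 \<in> ix"
  shows "\<exists>y1\<in>chosen i1. \<exists>y2\<in>chosen i2. (adj_avoiding H chosen_edges)\<^sup>*\<^sup>* y1 y2"
proof -
  obtain w z where cross: "w < m" "z < m" "\<forall>x<m. (w, x) \<in> clean" "\<forall>y<m. (y, z) \<in> clean"
    by (rule clean_cross)
  then obtain x0 where "x0 \<in> \<nu> (w, z)" using nu_nonempty by (force simp: mem_cells)
  then obtain y1 y2 where "y1 \<in> chosen i1" "(adj_avoiding H chosen_edges)\<^sup>*\<^sup>* y1 x0"
    "y2 \<in> chosen i2" "(adj_avoiding H chosen_edges)\<^sup>*\<^sup>* y2 x0"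
    using chosen_reaches_cross[OF _ cross] assms by meson
  then show ?thesis by (meson adj_avoiding_rtranclp_sym rtranclp_trans)
qed

definition rho :: "(nat \<times> nat) set \<Rightarrow> 'v set" where
  "rho X = chosen (the_inv_into ix ix_edge X)"

lemma rho_ix_edge: "i \<in> ix \<Longrightarrow> rho (ix_edge i) = chosen i"
  unfolding rho_def by (simp add: the_inv_into_f_f[OF inj_on_ix_edge])

lemma rho_image: "rho ` snd (grid n) = chosen_edges"
  unfolding grid_edges_eq_image image_image using rho_ix_edge by simp

lemma chosen_meets_branch:
  assumes "i \<in> ix" "u \<in> ix_edge i"
  shows "chosen i \<inter> branch u \<noteq> {}"
proof -
  have "spine i (g i) 0 \<in> block_cells (ix_src i)" "bridge i (g i) \<in> block_cells (ix_tgt i)"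
    using assms(1) g_lt spine_in_cells block_of_spine bridge_in_cells block_of_bridge
    unfolding block_cells_def L_def by auto
  moreover have "chosen i \<inter> \<nu> (spine i (g i) 0) \<noteq> {}" "chosen i \<inter> \<nu> (bridge i (g i)) \<noteq> {}"
    using bridge_edge assms(1) g_lt unfolding chosen_def by blast+
  ultimately show ?thesis using assms(2) unfolding branch_def ix_edge_def by blast
qed

lemma expressive_minor_map_branch: "expressive_minor_map (grid n) H branch"
  unfolding expressive_minor_map_def
proof (intro conjI exI[of _ rho] ballI allI impI)
  show "minor_map (grid n) (primal_graph H) branch" by (rule minor_map_branch)
  show "inj_on rho (snd (grid n))"
    unfolding grid_edges_eq_image
    by (rule inj_on_imageI) (auto simp: inj_on_def rho_ix_edge dest: inj_onD[OF inj_on_chosen])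
  show "rho ` snd (grid n) \<subseteq> hE H" unfolding rho_image using chosen_in_edges by blast
  fix u v assume "{u, v} \<in> snd (grid n)"
  then obtain i where "i \<in> ix" "{u, v} = ix_edge i" unfolding grid_edges_eq_image by blast
  then show "rho {u, v} \<inter> branch u \<noteq> {}" "rho {u, v} \<inter> branch v \<noteq> {}"
    using chosen_meets_branch rho_ix_edge by (metis insertI1 insertI2 insert_commute)+
next
  fix e1 e2 assume "e1 \<in> snd (grid n)" "e2 \<in> snd (grid n)"
  then obtain i1 i2 where i: "i1 \<in> ix" "e1 = ix_edge i1" "i2 \<in> ix" "e2 = ix_edge i2"
    unfolding grid_edges_eq_image by blast
  then obtain y1 y2 where "y1 \<in> chosen i1" "y2 \<in> chosen i2" "(adj_avoiding H chosen_edges)\<^sup>*\<^sup>* y1 y2"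
    using chosen_linked by blast
  then show "\<exists>es vs. hpath H es vs \<and> hd es = rho e1 \<and> last es = rho e2 \<and>
      (\<forall>f\<in>set es. f \<in> rho ` snd (grid n) \<longrightarrow> f = rho e1 \<or> f = rho e2)"
    using hpath_avoiding_exists[OF hypergraph chosen_in_edges chosen_in_edges] i
    unfolding rho_image by (simp add: rho_ix_edge)
qed

end

lemma (in grid_blocks) expressive_minor_grid: "expressive_minor (grid n) H"
proof -
  obtain g where "\<And>i. i \<in> ix \<Longrightarrow> g i < L"
    and "\<And>i i'. i \<in> ix \<Longrightarrow> i' \<in> ix \<Longrightarrow> i \<noteq> i' \<Longrightarrow> \<not> spoils i' (g i') i (g i)"
    by (rule exists_good_choice) blast
  then interpret good_choice H n m s \<nu> g by unfold_locales
  show ?thesis unfolding expressive_minor_def using expressive_minor_map_branch by blast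
qed

theorem lemmaB2:
  fixes H :: "'v hypergraph" and n m :: nat
  assumes "hypergraph H" and "finite (hV H)" and "hV H \<noteq> {}"
    and "reduced H"
    and "n \<ge> 1"
    and "m = 4 * hrank H ^ 6 * n ^ 5"
    and "is_minor (grid m) (primal_graph H)"
  shows "expressive_minor (grid n) H"
proof -
  obtain \<nu> where minor: "minor_map (grid m) (primal_graph H) \<nu>"
    using assms(7) unfolding is_minor_def by blast
  define s where "s = 4 * hrank H ^ 6 * n ^ 4"
  have fit: "n * s \<le> m"
    unfolding s_def assms(6) by (simp add: power_Suc[symmetric] mult_ac del: power_Suc)
  have large: "2 * card (grid_edge_ix n) * hrank H + 2 \<le> s"
    unfolding s_def using block_side_bound hrank_pos[OF assms(1-4)] assms(5) .
  interpret grid_blocks H n m s \<nu>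
    using assms(1,2,5) minor fit large by unfold_locales auto
  show ?thesis by (rule expressive_minor_grid)
qed

end
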